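(* For every two natural numbers $a,b$ with $3\le a\le b$, there exists a finite, simple, connected graph $G$ such that $\dim_{wt}(G)=a$ and $res_{wt}(G)=b$.
   Context: $d(x,y)$ is the shortest-path distance. A set $W\subseteq V(G)$ is a resolving set if for every two distinct vertices $y,z$ there is $x\in W$ with $d(y,x)\ne d(z,x)$. A set $W$ is a weak total resolving set (WTR-set) if $W$ is resolving and, for every $w\in W$ and every $x\in V(G)\setminus W$, there is $w'\in W\setminus\{w\}$ with $d(x,w')\ne d(w,w')$. $\dim_{wt}(G)$ is the minimum cardinality of a WTR-set. The weak total resolving number $res_{wt}(G)$ is the minimum positive integer $r$ such that every set of $r$ vertices of $G$ is a WTR-set for $G$. *)

theory Defs
  imports Main
begin

definition simple_graph :: "'a set \<Rightarrow> ('a \<Rightarrow> 'a \<Rightarrow> bool) \<Rightarrow> bool" where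
  "simple_graph V E \<longleftrightarrow> finite V \<and> V \<noteq> {}
     \<and> (\<forall>x y. E x y \<longrightarrow> x \<in> V \<and> y \<in> V)
     \<and> (\<forall>x y. E x y \<longrightarrow> E y x)
     \<and> (\<forall>x. \<not> E x x)"

definition walk :: "'a set \<Rightarrow> ('a \<Rightarrow> 'a \<Rightarrow> bool) \<Rightarrow> 'a list \<Rightarrow> bool" where
  "walk V E p \<longleftrightarrow> p \<noteq> [] \<and> set p \<subseteq> V
     \<and> (\<forall>i. Suc i < length p \<longrightarrow> E (p ! i) (p ! Suc i))"

definition connected_graph :: "'a set \<Rightarrow> ('a \<Rightarrow> 'a \<Rightarrow> bool) \<Rightarrow> bool" where
  "connected_graph V E \<longleftrightarrow>
     (\<forall>x\<in>V. \<forall>y\<in>V. \<exists>p. walk V E p \<and> hd p = x \<and> last p = y)"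

definition gdist :: "'a set \<Rightarrow> ('a \<Rightarrow> 'a \<Rightarrow> bool) \<Rightarrow> 'a \<Rightarrow> 'a \<Rightarrow> nat" where
  "gdist V E x y = (LEAST n. \<exists>p. walk V E p \<and> hd p = x \<and> last p = y \<and> length p = Suc n)"

definition resolving_set :: "'a set \<Rightarrow> ('a \<Rightarrow> 'a \<Rightarrow> bool) \<Rightarrow> 'a set \<Rightarrow> bool" where
  "resolving_set V E W \<longleftrightarrow> W \<subseteq> V \<and>
     (\<forall>y\<in>V. \<forall>z\<in>V. y \<noteq> z \<longrightarrow> (\<exists>x\<in>W. gdist V E y x \<noteq> gdist V E z x))"

definition wtr_set :: "'a set \<Rightarrow> ('a \<Rightarrow> 'a \<Rightarrow> bool) \<Rightarrow> 'a set \<Rightarrow> bool" where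
  "wtr_set V E W \<longleftrightarrow> resolving_set V E W \<and>
     (\<forall>w\<in>W. \<forall>x\<in>V - W. \<exists>w'\<in>W - {w}. gdist V E x w' \<noteq> gdist V E w w')"

definition dim_wt :: "'a set \<Rightarrow> ('a \<Rightarrow> 'a \<Rightarrow> bool) \<Rightarrow> nat" where
  "dim_wt V E = (LEAST k. \<exists>W. wtr_set V E W \<and> card W = k)"

definition res_wt :: "'a set \<Rightarrow> ('a \<Rightarrow> 'a \<Rightarrow> bool) \<Rightarrow> nat" where
  "res_wt V E = (LEAST r. 0 < r \<and> (\<forall>W. W \<subseteq> V \<and> card W = r \<longrightarrow> wtr_set V E W))"

end

theory Submission
  imports Defs
begin

text \<open>
  Take the complete graph \<open>K\<^sub>a\<close> with a path of \<open>b - a\<close> edges attached at one of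
  its vertices. The \<open>a - 1\<close> clique vertices off the path are pairwise twins, and a twin
  missing from a WTR-set could not be told apart from its partner, so every WTR-set contains
  them. They alone do not form a WTR-set (the attachment vertex and a clique vertex see the
  rest of the clique alike), while adding the attachment vertex does; hence \<open>dim\<^sub>w\<^sub>t = a\<close>.
  Since one fixed clique vertex lies in every WTR-set, only the full vertex set of size \<open>b\<close>
  is guaranteed to be one, so \<open>res\<^sub>w\<^sub>t = b\<close>.
\<close>

lemma walk_Cons:
  assumes "p \<noteq> []"
  shows "walk V E (x # p) \<longleftrightarrow> x \<in> V \<and> E x (hd p) \<and> walk V E p"
proof
  assume h: "walk V E (x # p)"
  have "E (p ! i) (p ! Suc i)" if "Suc i < length p" for i
    using h that unfolding walk_def by (metis Suc_less_eq length_Cons nth_Cons_Suc)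
  moreover have "E ((x # p) ! 0) ((x # p) ! Suc 0)"
    using h assms unfolding walk_def by (metis length_Cons length_greater_0_conv Suc_less_eq)
  ultimately show "x \<in> V \<and> E x (hd p) \<and> walk V E p"
    using h assms unfolding walk_def by (simp add: hd_conv_nth)
next
  assume "x \<in> V \<and> E x (hd p) \<and> walk V E p"
  then show "walk V E (x # p)"
    using assms unfolding walk_def by (auto simp: hd_conv_nth nth_Cons split: nat.split)
qed

lemma walk_length_ge_potential:
  assumes "walk V E p"
    and lipschitz: "\<And>u v y. E u v \<Longrightarrow> D u y \<le> D v y + (1::nat)"
    and diag: "\<And>y. D y y = 0"
  shows "D (hd p) (last p) \<le> length p - 1"
  using assms(1)
proof (induction p)
  case Nil
  then show ?case by (simp add: walk_def)
next
  case (Cons x q)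
  show ?case
  proof (cases "q = []")
    case True
    then show ?thesis using diag by simp
  next
    case False
    with Cons.prems have "E x (hd q)" "walk V E q" using walk_Cons by metis+
    with Cons.IH have "D (hd q) (last q) \<le> length q - 1" by blast
    moreover have "D x (last q) \<le> D (hd q) (last q) + 1" using lipschitz \<open>E x (hd q)\<close> .
    ultimately show ?thesis using False by (cases q) auto
  qed
qed

lemma walk_along_potential:
  assumes "y \<in> V"
    and zero: "\<And>x. x \<in> V \<Longrightarrow> D x y = (0::nat) \<Longrightarrow> x = y"
    and descent: "\<And>x. x \<in> V \<Longrightarrow> D x y \<noteq> 0 \<Longrightarrow> \<exists>z\<in>V. E x z \<and> Suc (D z y) = D x y"
    and "x \<in> V"
  shows "\<exists>p. walk V E p \<and> hd p = x \<and> last p = y \<and> length p = Suc (D x y)"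
  using \<open>x \<in> V\<close>
proof (induction "D x y" arbitrary: x)
  case 0
  then have "x = y" using zero by metis
  then show ?case using 0 by (intro exI[of _ "[x]"]) (auto simp: walk_def)
next
  case (Suc n)
  then obtain z where z: "z \<in> V" "E x z" "Suc (D z y) = D x y"
    using descent by (metis nat.distinct(1))
  with Suc.hyps(1)[of z] Suc.hyps(2) obtain p
    where p: "walk V E p" "hd p = z" "last p = y" "length p = Suc (D z y)"
    by auto
  then have "p \<noteq> []" by auto
  then have "walk V E (x # p)" using walk_Cons[of p V E x] p z Suc.prems by simp
  then show ?case using p z \<open>p \<noteq> []\<close> by (intro exI[of _ "x # p"]) auto
qed

lemma gdist_eqI:
  assumes "x \<in> V" "y \<in> V"
    and "\<And>u v y. E u v \<Longrightarrow> D u y \<le> D v y + (1::nat)" "\<And>y. D y y = 0"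
    and "\<And>x. x \<in> V \<Longrightarrow> D x y = (0::nat) \<Longrightarrow> x = y"
    and "\<And>x. x \<in> V \<Longrightarrow> D x y \<noteq> 0 \<Longrightarrow> \<exists>z\<in>V. E x z \<and> Suc (D z y) = D x y"
  shows "gdist V E x y = D x y"
  unfolding gdist_def
proof (rule Least_equality)
  show "\<exists>p. walk V E p \<and> hd p = x \<and> last p = y \<and> length p = Suc (D x y)"
    using walk_along_potential[of y V D E x] assms(1,2,5,6) by blast
next
  fix n
  assume "\<exists>p. walk V E p \<and> hd p = x \<and> last p = y \<and> length p = Suc n"
  then obtain p where "walk V E p" "hd p = x" "last p = y" "length p = Suc n" by blast
  then show "D x y \<le> n" using walk_length_ge_potential[of V E p D] assms(3,4) by simp
qed

lemma gdist_self:
  assumes "x \<in> V"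
  shows "gdist V E x x = 0"
  unfolding gdist_def using assms by (intro Least_eq_0) (auto intro: exI[of _ "[x]"] simp: walk_def)

lemma gdist_eq_0_iff:
  assumes "connected_graph V E" "x \<in> V" "y \<in> V"
  shows "gdist V E x y = 0 \<longleftrightarrow> x = y"
proof
  assume "gdist V E x y = 0"
  moreover obtain p where "walk V E p" "hd p = x" "last p = y"
    using assms unfolding connected_graph_def by blast
  then have "\<exists>n p. walk V E p \<and> hd p = x \<and> last p = y \<and> length p = Suc n"
    by (intro exI[of _ "length p - 1"] exI[of _ p]) (auto simp: walk_def)
  then have "\<exists>p. walk V E p \<and> hd p = x \<and> last p = y \<and> length p = Suc (gdist V E x y)"
    unfolding gdist_def by (rule LeastI_ex)
  ultimately obtain q where "hd q = x" "last q = y" "length q = 1" by auto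
  then show "x = y" by (cases q) auto
qed (use assms gdist_self in auto)

lemma wtr_set_vertex_set:
  assumes "connected_graph V E"
  shows "wtr_set V E V"
  unfolding wtr_set_def resolving_set_def
proof (intro conjI ballI impI)
  fix y z
  assume "y \<in> V" "z \<in> V" "y \<noteq> z"
  then have "gdist V E y z \<noteq> gdist V E z z"
    using gdist_eq_0_iff[OF assms, of y z] gdist_self[of z V E] by simp
  then show "\<exists>x\<in>V. gdist V E y x \<noteq> gdist V E z x" using \<open>z \<in> V\<close> by blast
qed auto

definition twins :: "'a set \<Rightarrow> ('a \<Rightarrow> 'a \<Rightarrow> bool) \<Rightarrow> 'a \<Rightarrow> 'a \<Rightarrow> bool" where
  "twins V E c c' \<longleftrightarrow> c \<in> V \<and> c' \<in> V \<and> c \<noteq> c'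
     \<and> (\<forall>x\<in>V - {c, c'}. gdist V E c x = gdist V E c' x)"

lemma twin_in_wtr_set:
  assumes "wtr_set V E W" "twins V E c c'"
  shows "c \<in> W"
proof (rule ccontr)
  assume "c \<notin> W"
  have c: "c \<in> V" "c' \<in> V" "c \<noteq> c'"
    and same: "\<And>x. x \<in> V \<Longrightarrow> x \<noteq> c \<Longrightarrow> x \<noteq> c' \<Longrightarrow> gdist V E c x = gdist V E c' x"
    using assms(2) unfolding twins_def by auto
  have "W \<subseteq> V" using assms(1) unfolding wtr_set_def resolving_set_def by blast
  show False
  proof (cases "c' \<in> W")
    case True
    then obtain w' where "w' \<in> W - {c'}" "gdist V E c w' \<noteq> gdist V E c' w'"
      using assms(1) \<open>c \<notin> W\<close> c unfolding wtr_set_def by blast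
    then show False using same \<open>c \<notin> W\<close> \<open>W \<subseteq> V\<close> by blast
  next
    case False
    then obtain x where "x \<in> W" "gdist V E c x \<noteq> gdist V E c' x"
      using assms(1) c unfolding wtr_set_def resolving_set_def by blast
    then show False using same \<open>c \<notin> W\<close> False \<open>W \<subseteq> V\<close> by blast
  qed
qed

lemma dim_wt_eqI:
  assumes "wtr_set V E W" "card W = k" "\<And>W'. wtr_set V E W' \<Longrightarrow> k \<le> card W'"
  shows "dim_wt V E = k"
  unfolding dim_wt_def using assms by (intro Least_equality) auto

lemma res_wt_eq_card:
  assumes "finite V" "wtr_set V E V" "v \<in> V" "\<And>W. wtr_set V E W \<Longrightarrow> v \<in> W"
  shows "res_wt V E = card V"
  unfolding res_wt_def
proof (rule Least_equality)
  show "0 < card V \<and> (\<forall>W. W \<subseteq> V \<and> card W = card V \<longrightarrow> wtr_set V E W)"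
    using assms card_subset_eq card_gt_0_iff by blast
next
  fix r
  assume r: "0 < r \<and> (\<forall>W. W \<subseteq> V \<and> card W = r \<longrightarrow> wtr_set V E W)"
  show "card V \<le> r"
  proof (rule ccontr)
    assume "\<not> card V \<le> r"
    then have "r \<le> card (V - {v})" using assms(1,3) by simp
    then obtain W where "W \<subseteq> V - {v}" "card W = r"
      using obtain_subset_with_card_n by metis
    then show False using r assms(4) by blast
  qed
qed

text \<open>
  On the vertices \<open>{0..<b}\<close>: the path \<open>0 \<dash> 1 \<dash> \<dots> \<dash> m\<close> together with the clique on
  \<open>{m..<b}\<close>. The distance from \<open>x\<close> to \<open>y\<close> is the distance of their projections to the
  path, plus one if they are distinct and one of them lies off the path.
\<close>

definition lollipop :: "nat \<Rightarrow> nat \<Rightarrow> nat \<Rightarrow> nat \<Rightarrow> bool" where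
  "lollipop m b x y \<longleftrightarrow>
     x < b \<and> y < b \<and> x \<noteq> y \<and> ((m \<le> x \<and> m \<le> y) \<or> x = Suc y \<or> y = Suc x)"

definition lollipop_dist :: "nat \<Rightarrow> nat \<Rightarrow> nat \<Rightarrow> nat" where
  "lollipop_dist m x y = (min x m - min y m) + (min y m - min x m)
     + (if x \<noteq> y \<and> (m < x \<or> m < y) then 1 else 0)"

lemma lollipop_dist_eq_0_iff: "lollipop_dist m x y = 0 \<longleftrightarrow> x = y"
  unfolding lollipop_dist_def by (auto simp: min_def)

lemma lollipop_dist_descent:
  assumes "x < b" "y < b" "m < b" "lollipop_dist m x y \<noteq> 0"
  shows "\<exists>z\<in>{0..<b}. lollipop m b x z \<and> Suc (lollipop_dist m z y) = lollipop_dist m x y"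
proof -
  define z where "z = (if m \<le> x \<and> m \<le> y then y
                       else if x < min y m then x + 1 else if m < x then m else x - 1)"
  have "x \<noteq> y" using assms lollipop_dist_eq_0_iff by metis
  then have "z < b \<and> lollipop m b x z \<and> Suc (lollipop_dist m z y) = lollipop_dist m x y"
    using assms unfolding z_def lollipop_def lollipop_dist_def by (auto simp: min_def)
  then show ?thesis by auto
qed

lemma gdist_lollipop:
  assumes "x < b" "y < b" "m < b"
  shows "gdist {0..<b} (lollipop m b) x y = lollipop_dist m x y"
proof (rule gdist_eqI)
  show "lollipop_dist m u y' \<le> lollipop_dist m v y' + 1" if "lollipop m b u v" for u v y'
    using that unfolding lollipop_def lollipop_dist_def by (auto simp: min_def)
qed (use assms lollipop_dist_eq_0_iff lollipop_dist_descent[of _ b y m] in auto)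

lemma connected_lollipop:
  assumes "m < b"
  shows "connected_graph {0..<b} (lollipop m b)"
  unfolding connected_graph_def
proof (intro ballI)
  fix x y
  assume "x \<in> {0..<b}" "y \<in> {0..<b}"
  then show "\<exists>p. walk {0..<b} (lollipop m b) p \<and> hd p = x \<and> last p = y"
    using walk_along_potential[of y "{0..<b}" "lollipop_dist m" "lollipop m b" x]
      lollipop_dist_eq_0_iff lollipop_dist_descent[of _ b y m] assms
    by auto
qed

lemma twins_lollipop:
  assumes "m < c" "m < c'" "c < b" "c' < b" "c \<noteq> c'"
  shows "twins {0..<b} (lollipop m b) c c'"
  using assms unfolding twins_def by (auto simp: gdist_lollipop lollipop_dist_def min_def)

lemma not_wtr_set_lollipop_tail:
  assumes "m + 3 \<le> b"
  shows "\<not> wtr_set {0..<b} (lollipop m b) {Suc m..<b}"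
proof
  assume "wtr_set {0..<b} (lollipop m b) {Suc m..<b}"
  moreover have "Suc m \<in> {Suc m..<b}" "m \<in> {0..<b} - {Suc m..<b}" using assms by auto
  ultimately obtain w' where "w' \<in> {Suc m..<b} - {Suc m}"
      "gdist {0..<b} (lollipop m b) m w' \<noteq> gdist {0..<b} (lollipop m b) (Suc m) w'"
    unfolding wtr_set_def by blast
  then show False by (auto simp: gdist_lollipop lollipop_dist_def min_def)
qed

lemma wtr_set_lollipop_clique:
  assumes "m + 3 \<le> b"
  shows "wtr_set {0..<b} (lollipop m b) {m..<b}"
  unfolding wtr_set_def resolving_set_def
proof (intro conjI ballI impI)
  fix y z
  assume yz: "y \<in> {0..<b}" "z \<in> {0..<b}" "y \<noteq> z"
  consider "m \<le> y" | "m \<le> z" | "y < m" "z < m" by linarith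
  then show "\<exists>x\<in>{m..<b}. gdist {0..<b} (lollipop m b) y x \<noteq> gdist {0..<b} (lollipop m b) z x"
  proof cases
    case 1
    then show ?thesis
      using yz assms lollipop_dist_eq_0_iff[of m z y]
      by (intro bexI[of _ y]) (auto simp: gdist_lollipop lollipop_dist_def)
  next
    case 2
    then show ?thesis
      using yz assms lollipop_dist_eq_0_iff[of m y z]
      by (intro bexI[of _ z]) (auto simp: gdist_lollipop lollipop_dist_def)
  next
    case 3
    then show ?thesis
      using yz assms by (intro bexI[of _ m]) (auto simp: gdist_lollipop lollipop_dist_def min_def)
  qed
next
  fix w x
  assume w: "w \<in> {m..<b}" and x: "x \<in> {0..<b} - {m..<b}"
  define w' where "w' = (if w = Suc m then Suc (Suc m) else Suc m)"
  have "w' \<in> {m..<b} - {w}" using w assms unfolding w'_def by auto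
  moreover have "gdist {0..<b} (lollipop m b) x w' \<noteq> gdist {0..<b} (lollipop m b) w w'"
    using w x assms unfolding w'_def by (auto simp: gdist_lollipop lollipop_dist_def min_def)
  ultimately show "\<exists>w'\<in>{m..<b} - {w}.
      gdist {0..<b} (lollipop m b) x w' \<noteq> gdist {0..<b} (lollipop m b) w w'" by blast
qed auto

lemma lollipop_tail_psubset_wtr_set:
  assumes "m + 3 \<le> b" "wtr_set {0..<b} (lollipop m b) W"
  shows "{Suc m..<b} \<subset> W"
proof -
  have "c \<in> W" if "c \<in> {Suc m..<b}" for c
  proof -
    define c' where "c' = (if c = Suc m then Suc (Suc m) else Suc m)"
    have "twins {0..<b} (lollipop m b) c c'"
      using that assms(1) unfolding c'_def by (intro twins_lollipop) auto
    then show ?thesis using twin_in_wtr_set[OF assms(2)] by blast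
  qed
  moreover have "W \<noteq> {Suc m..<b}" using not_wtr_set_lollipop_tail[OF assms(1)] assms(2) by auto
  ultimately show ?thesis by auto
qed

lemma card_wtr_set_lollipop_ge:
  assumes "m + 3 \<le> b" "wtr_set {0..<b} (lollipop m b) W"
  shows "b - m \<le> card W"
proof -
  have "finite W" using assms(2) finite_subset unfolding wtr_set_def resolving_set_def by blast
  then have "card {Suc m..<b} < card W"
    using lollipop_tail_psubset_wtr_set[OF assms] psubset_card_mono by blast
  then show ?thesis by simp
qed

theorem theorem8:
  fixes a b :: nat
  assumes "3 \<le> a" and "a \<le> b"
  shows "\<exists>(V :: nat set) (E :: nat \<Rightarrow> nat \<Rightarrow> bool).
           simple_graph V E \<and> connected_graph V E \<and>
           dim_wt V E = a \<and> res_wt V E = b"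
proof (intro exI conjI)
  define m where "m = b - a"
  have mb: "m + 3 \<le> b" using assms unfolding m_def by simp
  show "simple_graph {0..<b} (lollipop m b)"
    unfolding simple_graph_def lollipop_def using mb by auto
  show connected: "connected_graph {0..<b} (lollipop m b)"
    using connected_lollipop mb by simp
  have "dim_wt {0..<b} (lollipop m b) = card {m..<b}"
    by (rule dim_wt_eqI[OF wtr_set_lollipop_clique[OF mb] refl])
      (simp add: card_wtr_set_lollipop_ge[OF mb])
  then show "dim_wt {0..<b} (lollipop m b) = a" using assms unfolding m_def by simp
  have "b - 1 \<in> {Suc m..<b}" using mb by simp
  then have "b - 1 \<in> W" if "wtr_set {0..<b} (lollipop m b) W" for W
    using lollipop_tail_psubset_wtr_set[OF mb that] by blast
  then show "res_wt {0..<b} (lollipop m b) = b"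
    using mb by (subst res_wt_eq_card[OF _ wtr_set_vertex_set[OF connected], of "b - 1"]) auto
qed

end
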